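(* Let $K$ be an algebraically closed field of characteristic $p>0$ (in the setting below). Then there exists a sequence $x_1,x_2,\dots\in K^\vee$ such that $\{\pi(x_1),\pi(x_2),\dots\}$ is an orthogonal subset of $K^\vee/K$, where $\pi:K^\vee\to K^\vee/K$ is the canonical quotient map.
   Context: $K$ is a complete non-archimedean non-trivially valued field which is not spherically complete; $K^\vee$ is a fixed spherically complete valued field which is an immediate extension of $K$, regarded as a $K$-normed space with its absolute value. $K^\vee/K$ carries the quotient norm $\|\pi(z)\|=\inf_{a\in K}|z-a|$. A subset $S$ not containing $0$ is orthogonal if $\|\sum_i\lambda_is_i\|=\max_i\|\lambda_is_i\|$ for all finitely many distinct $s_i\in S$ and $\lambda_i\in K$. *)

theory Defs
  imports Main "HOL.Real"
begin

text \<open>Valued fields are modelled inside one field type 'a playing the role of K^vee,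
  with an absolute value v on 'a and a subfield K :: 'a set.\<close>

definition nonarch_abs :: "('a::field \<Rightarrow> real) \<Rightarrow> bool" where
  "nonarch_abs v \<longleftrightarrow> (\<forall>x. v x \<ge> 0) \<and> (\<forall>x. v x = 0 \<longleftrightarrow> x = 0)
     \<and> (\<forall>x y. v (x * y) = v x * v y) \<and> (\<forall>x y. v (x + y) \<le> max (v x) (v y))"

definition subfield :: "'a::field set \<Rightarrow> bool" where
  "subfield K \<longleftrightarrow> 0 \<in> K \<and> 1 \<in> K \<and> (\<forall>x\<in>K. \<forall>y\<in>K. x + y \<in> K \<and> x * y \<in> K)
     \<and> (\<forall>x\<in>K. - x \<in> K) \<and> (\<forall>x\<in>K. x \<noteq> 0 \<longrightarrow> inverse x \<in> K)"

definition complete_wrt :: "('a::field \<Rightarrow> real) \<Rightarrow> 'a set \<Rightarrow> bool" where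
  "complete_wrt v K \<longleftrightarrow> (\<forall>s::nat \<Rightarrow> 'a. (\<forall>n. s n \<in> K) \<longrightarrow>
     (\<forall>e>0. \<exists>N. \<forall>m\<ge>N. \<forall>n\<ge>N. v (s m - s n) < e) \<longrightarrow>
     (\<exists>l\<in>K. \<forall>e>0. \<exists>N. \<forall>n\<ge>N. v (s n - l) < e))"

definition nontrivially_valued :: "('a::field \<Rightarrow> real) \<Rightarrow> 'a set \<Rightarrow> bool" where
  "nontrivially_valued v K \<longleftrightarrow> (\<exists>a\<in>K. v a \<noteq> 0 \<and> v a \<noteq> 1)"

definition cball_in :: "('a::field \<Rightarrow> real) \<Rightarrow> 'a set \<Rightarrow> 'a \<Rightarrow> real \<Rightarrow> 'a set" where
  "cball_in v S c r = {x\<in>S. v (x - c) \<le> r}"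

definition spherically_complete :: "('a::field \<Rightarrow> real) \<Rightarrow> 'a set \<Rightarrow> bool" where
  "spherically_complete v S \<longleftrightarrow> (\<forall>F::('a \<times> real) set.
     F \<noteq> {} \<longrightarrow> (\<forall>(c,r)\<in>F. c \<in> S \<and> r > 0) \<longrightarrow>
     (\<forall>(c,r)\<in>F. \<forall>(c',r')\<in>F. cball_in v S c r \<subseteq> cball_in v S c' r' \<or> cball_in v S c' r' \<subseteq> cball_in v S c r) \<longrightarrow>
     (\<Inter>(c,r)\<in>F. cball_in v S c r) \<noteq> {})"

text \<open>Immediate extension of K to the whole field 'a: same value group and same residue field.\<close>
definition immediate_ext :: "('a::field \<Rightarrow> real) \<Rightarrow> 'a set \<Rightarrow> bool" where
  "immediate_ext v K \<longleftrightarrow> v ` (UNIV - {0}) = v ` (K - {0})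
     \<and> (\<forall>x. v x \<le> 1 \<longrightarrow> (\<exists>a\<in>K. v a \<le> 1 \<and> v (x - a) < 1))"

definition alg_closed_sub :: "'a::field set \<Rightarrow> bool" where
  "alg_closed_sub K \<longleftrightarrow> (\<forall>n::nat. \<forall>c::nat \<Rightarrow> 'a. n \<ge> 1 \<longrightarrow> (\<forall>i<n. c i \<in> K) \<longrightarrow>
     (\<exists>x\<in>K. x ^ n + (\<Sum>i<n. c i * x ^ i) = 0))"

text \<open>Quotient norm on K^vee / K: the norm of pi(z).\<close>
definition qnorm :: "('a::field \<Rightarrow> real) \<Rightarrow> 'a set \<Rightarrow> 'a \<Rightarrow> real" where
  "qnorm v K z = (INF a\<in>K. v (z - a))"

end

theory Submission
  imports Defs "HOL-Computational_Algebra.Polynomial" "HOL-Computational_Algebra.Primes"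
begin

text \<open>Take z outside K and put x_i = z^(p^i). For coefficients lam_i in K, the sum of the
  lam_i x_i is P(z) for the additive polynomial P = sum of lam_i X^(p^i). Since K is
  algebraically closed, P - a has a root b in K for every a in K, and P splits over K with a
  group of roots. Translating z - b by its nearest root gives u with |u| \<ge> ||pi(z)|| and
  |u - r| \<ge> max(|u|, |r|) for every root r, so expanding P(u) = c * prod (u - r) bounds
  |P(z) - a| from below by |lam_i| ||pi(z)||^(p^i) for each i. Conversely,
  ||pi(lam z^q)|| \<le> |lam| ||pi(z)||^q because Frobenius is additive, and the ultrametric
  inequality for the quotient norm closes the chain. Completeness of K gives ||pi(z)|| > 0.
  The spherical completeness hypotheses serve only to produce z outside K.\<close>

lemma prod_list_mono:
  fixes f g :: "'b \<Rightarrow> 'a::linordered_semidom"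
  assumes "\<And>x. x \<in> set xs \<Longrightarrow> 0 \<le> f x \<and> f x \<le> g x"
  shows "(\<Prod>x\<leftarrow>xs. f x) \<le> (\<Prod>x\<leftarrow>xs. g x)"
  using assms by (induction xs) (auto intro!: mult_mono prod_list_nonneg intro: order_trans)

definition additive_poly :: "'a::comm_semiring_0 poly \<Rightarrow> bool" where
  "additive_poly P \<longleftrightarrow> (\<forall>x y. poly P (x + y) = poly P x + poly P y)"

lemma additive_poly_zero:
  fixes P :: "'a::comm_ring poly"
  shows "additive_poly P \<Longrightarrow> poly P 0 = 0"
  unfolding additive_poly_def by (metis add_cancel_right_right add_0)

lemma additive_poly_sum:
  "(\<And>k. k \<in> I \<Longrightarrow> additive_poly (P k)) \<Longrightarrow> additive_poly (\<Sum>k\<in>I. P k)"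
  unfolding additive_poly_def by (simp add: poly_sum sum.distrib)

lemma additive_poly_frobenius_monom:
  fixes c :: "'a::comm_semiring_1"
  assumes "prime CHAR('a)"
  shows "additive_poly (monom c (CHAR('a) ^ n))"
  using assms unfolding additive_poly_def
  by (simp add: poly_monom freshmans_dream' distrib_left)

lemma poly_linear_factors:
  fixes x :: "'a::comm_ring_1"
  shows "poly (\<Prod>r\<leftarrow>rs. [:- r, 1:]) x = (\<Prod>r\<leftarrow>rs. x - r)"
  by (induction rs) (simp_all add: algebra_simps)

locale nonarch_valued_field =
  fixes v :: "'a::field \<Rightarrow> real"
  assumes nonarch_abs: "nonarch_abs v"
begin

lemma v_nonneg [simp]: "0 \<le> v x"
  and v_eq_0_iff [simp]: "v x = 0 \<longleftrightarrow> x = 0"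
  and v_mult: "v (x * y) = v x * v y"
  and v_add_le_max: "v (x + y) \<le> max (v x) (v y)"
  using nonarch_abs unfolding nonarch_abs_def by blast+

lemma v_zero [simp]: "v 0 = 0"
  by simp

lemma v_one [simp]: "v 1 = 1"
  using v_mult[of 1 1] by simp

lemma v_minus [simp]: "v (- x) = v x"
proof -
  have "v (- 1) ^ 2 = 1"
    using v_mult[of "- 1" "- 1"] by (simp add: power2_eq_square)
  then have "v (- 1) = 1"
    using v_nonneg[of "- 1"] by (simp add: power2_eq_1_iff)
  then show ?thesis
    using v_mult[of "- 1" x] by simp
qed

lemma v_diff_le_max: "v (x - y) \<le> max (v x) (v y)"
  using v_add_le_max[of x "- y"] by simp

lemma v_add_less: "v x < e \<Longrightarrow> v y < e \<Longrightarrow> v (x + y) < e"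
  using v_add_le_max[of x y] by linarith

lemma v_diff_less: "v x < e \<Longrightarrow> v y < e \<Longrightarrow> v (x - y) < e"
  using v_diff_le_max[of x y] by linarith

lemma v_power: "v (x ^ n) = v x ^ n"
  by (induction n) (simp_all add: v_mult)

lemma v_prod_list: "v (\<Prod>x\<leftarrow>xs. f x) = (\<Prod>x\<leftarrow>xs. v (f x))"
  by (induction xs) (simp_all add: v_mult)

lemma v_coeff_linear_factors_le:
  assumes "0 \<le> s"
  shows "v (coeff (\<Prod>r\<leftarrow>rs. [:- r, 1:]) i) * s ^ i \<le> (\<Prod>r\<leftarrow>rs. max s (v r))"
proof (induction rs arbitrary: i)
  case Nil
  then show ?case
    by (cases i) simp_all
next
  case (Cons r rs)
  let ?g = "\<Prod>r\<leftarrow>rs. [:- r, 1:]" and ?B = "\<Prod>r\<leftarrow>rs. max s (v r)"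
  have "0 \<le> ?B"
    using assms by (intro prod_list_nonneg) auto
  have "v (- r * coeff ?g i) * s ^ i = v r * (v (coeff ?g i) * s ^ i)"
    by (simp add: v_mult)
  also have "\<dots> \<le> max s (v r) * ?B"
    using Cons.IH assms \<open>0 \<le> ?B\<close> by (intro mult_mono) auto
  finally have low: "v (- r * coeff ?g i) * s ^ i \<le> max s (v r) * ?B" .
  have high: "v (coeff (pCons 0 ?g) i) * s ^ i \<le> max s (v r) * ?B"
  proof (cases i)
    case 0
    then show ?thesis
      using assms \<open>0 \<le> ?B\<close> by simp
  next
    case (Suc j)
    then have "v (coeff (pCons 0 ?g) i) * s ^ i = s * (v (coeff ?g j) * s ^ j)"
      by simp
    also have "\<dots> \<le> max s (v r) * ?B"
      using Cons.IH assms \<open>0 \<le> ?B\<close> by (intro mult_mono) auto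
    finally show ?thesis .
  qed
  have "coeff (\<Prod>r\<leftarrow>r # rs. [:- r, 1:]) i = - r * coeff ?g i + coeff (pCons 0 ?g) i"
    by simp
  then have "v (coeff (\<Prod>r\<leftarrow>r # rs. [:- r, 1:]) i)
      \<le> max (v (- r * coeff ?g i)) (v (coeff (pCons 0 ?g) i))"
    by (simp only: v_add_le_max)
  then have "v (coeff (\<Prod>r\<leftarrow>r # rs. [:- r, 1:]) i) * s ^ i
      \<le> max (v (- r * coeff ?g i)) (v (coeff (pCons 0 ?g) i)) * s ^ i"
    using assms by (simp add: mult_right_mono)
  also have "\<dots> = max (v (- r * coeff ?g i) * s ^ i) (v (coeff (pCons 0 ?g) i) * s ^ i)"
    using assms by (simp add: max_mult_distrib_right)
  also have "\<dots> \<le> max s (v r) * ?B"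
    using low high by (rule max.boundedI)
  finally show ?case
    by simp
qed

lemma v_poly_split_ge:
  assumes P: "P = smult l (\<Prod>r\<leftarrow>rs. [:- r, 1:])"
    and nearest: "\<And>r. r \<in> set rs \<Longrightarrow> v u \<le> v (u - r)"
  shows "v (coeff P i) * v u ^ i \<le> v (poly P u)"
proof -
  have far: "max (v u) (v r) \<le> v (u - r)" if "r \<in> set rs" for r
  proof -
    have "v r = v (u - (u - r))"
      by simp
    also have "\<dots> \<le> max (v u) (v (u - r))"
      by (rule v_diff_le_max)
    finally show ?thesis
      using nearest[OF that] by simp
  qed
  have "v (coeff P i) * v u ^ i = v l * (v (coeff (\<Prod>r\<leftarrow>rs. [:- r, 1:]) i) * v u ^ i)"
    using P by (simp add: v_mult)
  also have "\<dots> \<le> v l * (\<Prod>r\<leftarrow>rs. max (v u) (v r))"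
    by (intro mult_left_mono v_coeff_linear_factors_le) simp_all
  also have "\<dots> \<le> v l * (\<Prod>r\<leftarrow>rs. v (u - r))"
    using far by (intro mult_left_mono prod_list_mono) (auto simp: le_max_iff_disj)
  also have "\<dots> = v (poly P u)"
    using P by (simp add: v_mult v_prod_list poly_linear_factors)
  finally show ?thesis .
qed

text \<open>The roots of an additive polynomial form a group, so translating t by its nearest
  root r0 gives a point that is at least as close to 0 as to any other root.\<close>
lemma v_additive_poly_ge_nearest_root:
  assumes "additive_poly P" "P \<noteq> 0"
    and P: "P = smult c (\<Prod>r\<leftarrow>rs. [:- r, 1:])"
  obtains r0 where "r0 \<in> set rs" "v (coeff P i) * v (t - r0) ^ i \<le> v (poly P t)"
proof -
  have "c \<noteq> 0"
    using assms(2) P by auto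
  have root_iff: "poly P x = 0 \<longleftrightarrow> x \<in> set rs" for x
  proof -
    have "poly P x = c * (\<Prod>r\<leftarrow>rs. x - r)"
      using arg_cong[OF P, of "\<lambda>Q. poly Q x"] by (simp add: poly_linear_factors)
    then show ?thesis
      using \<open>c \<noteq> 0\<close> by (auto simp: prod_list_zero_iff)
  qed
  have "0 \<in> set rs"
    using root_iff additive_poly_zero[OF assms(1)] by blast
  then obtain r0 where r0: "r0 \<in> set rs"
    and closest: "\<And>r. r \<in> set rs \<Longrightarrow> v (t - r0) \<le> v (t - r)"
    using ex_is_arg_min_if_finite[of "set rs" "\<lambda>r. v (t - r)"]
    unfolding is_arg_min_linorder by fastforce
  have "v (t - r0) \<le> v (t - r0 - r)" if "r \<in> set rs" for r
  proof -
    have "r0 + r \<in> set rs"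
      using assms(1) r0 that by (simp add: additive_poly_def flip: root_iff)
    then show ?thesis
      using closest by (simp add: diff_diff_eq)
  qed
  with P have "v (coeff P i) * v (t - r0) ^ i \<le> v (poly P (t - r0))"
    by (rule v_poly_split_ge)
  also have "poly P (t - r0) = poly P t"
    using assms(1) r0 root_iff[of r0] unfolding additive_poly_def
    by (metis add_0_right diff_add_cancel)
  finally show ?thesis
    using r0 that by blast
qed

end

locale subfield_of =
  fixes K :: "'a::field set"
  assumes subfield: "subfield K"
begin

lemma zero_closed [simp]: "0 \<in> K"
  and one_closed [simp]: "1 \<in> K"
  and add_closed: "x \<in> K \<Longrightarrow> y \<in> K \<Longrightarrow> x + y \<in> K"
  and mult_closed: "x \<in> K \<Longrightarrow> y \<in> K \<Longrightarrow> x * y \<in> K"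
  and uminus_closed: "x \<in> K \<Longrightarrow> - x \<in> K"
  using subfield unfolding subfield_def by blast+

lemma inverse_closed: "x \<in> K \<Longrightarrow> inverse x \<in> K"
  using subfield unfolding subfield_def by (cases "x = 0") auto

lemma diff_closed: "x \<in> K \<Longrightarrow> y \<in> K \<Longrightarrow> x - y \<in> K"
  by (metis add_closed uminus_closed diff_conv_add_uminus)

lemma divide_closed: "x \<in> K \<Longrightarrow> y \<in> K \<Longrightarrow> x / y \<in> K"
  by (simp add: divide_inverse mult_closed inverse_closed)

lemma power_closed: "x \<in> K \<Longrightarrow> x ^ n \<in> K"
  by (induction n) (simp_all add: mult_closed)

lemma sum_closed: "(\<And>i. i \<in> A \<Longrightarrow> f i \<in> K) \<Longrightarrow> sum f A \<in> K"
  by (induction A rule: infinite_finite_induct) (simp_all add: add_closed)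

lemma poly_closed: "(\<And>i. coeff f i \<in> K) \<Longrightarrow> x \<in> K \<Longrightarrow> poly f x \<in> K"
  by (simp add: poly_altdef sum_closed mult_closed power_closed)

lemma coeff_synthetic_div_closed:
  "(\<And>i. coeff f i \<in> K) \<Longrightarrow> r \<in> K \<Longrightarrow> coeff (synthetic_div f r) i \<in> K"
proof (induction f arbitrary: i)
  case (pCons a f)
  have "coeff f i \<in> K" for i
    using pCons.prems(1)[of "Suc i"] by simp
  with pCons show ?case
    by (cases i) (simp_all add: poly_closed)
qed simp

end

locale alg_closed_subfield = subfield_of +
  assumes alg_closed: "alg_closed_sub K"
begin

lemma poly_has_root:
  assumes "\<And>i. coeff f i \<in> K" and "0 < degree f"
  obtains x where "x \<in> K" "poly f x = 0"
proof -
  let ?n = "degree f" and ?l = "lead_coeff f"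
  have "?l \<noteq> 0"
    using assms(2) by auto
  obtain x where "x \<in> K" and x: "x ^ ?n + (\<Sum>i<?n. coeff f i / ?l * x ^ i) = 0"
    using alg_closed[unfolded alg_closed_sub_def, rule_format, of ?n "\<lambda>i. coeff f i / ?l"]
      assms by (auto intro: divide_closed)
  have "poly f x = (\<Sum>i<?n. coeff f i * x ^ i) + ?l * x ^ ?n"
    by (simp add: poly_altdef lessThan_Suc_atMost[symmetric])
  also have "\<dots> = ?l * (x ^ ?n + (\<Sum>i<?n. coeff f i / ?l * x ^ i))"
    using \<open>?l \<noteq> 0\<close> by (simp add: algebra_simps sum_distrib_left)
  finally show ?thesis
    using that \<open>x \<in> K\<close> x by simp
qed

lemma poly_splits:
  assumes "\<And>i. coeff f i \<in> K"
  shows "\<exists>c rs. set rs \<subseteq> K \<and> f = smult c (\<Prod>r\<leftarrow>rs. [:- r, 1:])"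
  using assms
proof (induction "degree f" arbitrary: f)
  case 0
  then have "f = smult (coeff f 0) (\<Prod>r\<leftarrow>[]. [:- r, 1:])"
    by (metis degree_0_id prod_list.Nil list.map(1) smult_one)
  then show ?case
    by (metis empty_subsetI list.set(1))
next
  case (Suc n)
  obtain r where "r \<in> K" "poly f r = 0"
    using poly_has_root Suc by (metis zero_less_Suc)
  define g where "g = synthetic_div f r"
  have f: "f = [:- r, 1:] * g"
    using synthetic_div_correct'[of r f] \<open>poly f r = 0\<close> by (simp add: g_def)
  have "n = degree g"
    using Suc.hyps(2) by (simp add: g_def degree_synthetic_div)
  moreover have "\<And>i. coeff g i \<in> K"
    using Suc.prems \<open>r \<in> K\<close> unfolding g_def by (rule coeff_synthetic_div_closed)
  ultimately obtain c rs where "set rs \<subseteq> K" and g: "g = smult c (\<Prod>r\<leftarrow>rs. [:- r, 1:])"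
    using Suc.hyps(1) by blast
  then have "set (r # rs) \<subseteq> K \<and> f = smult c (\<Prod>r\<leftarrow>r # rs. [:- r, 1:])"
    using f \<open>r \<in> K\<close> by simp
  then show ?case
    by blast
qed

lemma additive_poly_surj:
  assumes "additive_poly P" "P \<noteq> 0" "\<And>i. coeff P i \<in> K" "a \<in> K"
  obtains b where "b \<in> K" "poly P b = a"
proof -
  have "0 < degree P"
  proof (rule ccontr)
    assume "\<not> 0 < degree P"
    then have "P = [:poly P 0:]"
      by (metis degree_0_id gr0I poly_0_coeff_0)
    then show False
      using assms(1,2) by (simp add: additive_poly_zero)
  qed
  then have "degree (P + [:- a:]) = degree P"
    by (intro degree_add_eq_left) simp
  moreover have "coeff (P + [:- a:]) i \<in> K" for i
    using assms(3,4) by (cases i) (simp_all add: diff_closed)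
  ultimately obtain b where "b \<in> K" "poly (P + [:- a:]) b = 0"
    using poly_has_root \<open>0 < degree P\<close> by metis
  then show ?thesis
    using that by simp
qed

end

locale valued_subfield = nonarch_valued_field v + subfield_of K
  for v :: "'a::field \<Rightarrow> real" and K :: "'a set"
begin

lemma bdd_below_dist_subfield: "bdd_below ((\<lambda>a. v (y - a)) ` K)"
  by (rule bdd_belowI[of _ 0]) auto

lemma qnorm_le: "a \<in> K \<Longrightarrow> qnorm v K y \<le> v (y - a)"
  unfolding qnorm_def by (rule cINF_lower[OF bdd_below_dist_subfield])

lemma qnorm_greatest: "(\<And>a. a \<in> K \<Longrightarrow> c \<le> v (y - a)) \<Longrightarrow> c \<le> qnorm v K y"
  unfolding qnorm_def using zero_closed by (blast intro: cINF_greatest)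

lemma qnorm_nonneg: "0 \<le> qnorm v K y"
  by (rule qnorm_greatest) simp

lemma qnorm_less_iff: "qnorm v K y < e \<longleftrightarrow> (\<exists>a\<in>K. v (y - a) < e)"
  unfolding qnorm_def by (metis cINF_less_iff bdd_below_dist_subfield empty_iff zero_closed)

lemma qnorm_mem: "y \<in> K \<Longrightarrow> qnorm v K y = 0"
  using qnorm_le[of y y] qnorm_nonneg[of y] by simp

lemma not_mem_if_qnorm_pos: "0 < qnorm v K y \<Longrightarrow> y \<notin> K"
  using qnorm_mem by force

lemma qnorm_add_le: "qnorm v K (x + y) \<le> max (qnorm v K x) (qnorm v K y)"
proof (rule ccontr)
  assume "\<not> ?thesis"
  then obtain a b where "a \<in> K" "v (x - a) < qnorm v K (x + y)"
    and "b \<in> K" "v (y - b) < qnorm v K (x + y)"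
    by (auto simp: qnorm_less_iff not_le)
  then have "v ((x - a) + (y - b)) < qnorm v K (x + y)"
    by (intro v_add_less)
  moreover have "qnorm v K (x + y) \<le> v ((x - a) + (y - b))"
    using qnorm_le[of "a + b" "x + y"] \<open>a \<in> K\<close> \<open>b \<in> K\<close> by (simp add: add_closed algebra_simps)
  ultimately show False
    by simp
qed

lemma qnorm_sum_le:
  "finite I \<Longrightarrow> I \<noteq> {} \<Longrightarrow> qnorm v K (\<Sum>i\<in>I. f i) \<le> (MAX i\<in>I. qnorm v K (f i))"
proof (induction I rule: finite_ne_induct)
  case (insert i I)
  have "qnorm v K (\<Sum>i\<in>insert i I. f i) \<le> max (qnorm v K (f i)) (qnorm v K (\<Sum>i\<in>I. f i))"
    using insert.hyps by (simp add: qnorm_add_le)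
  also have "\<dots> \<le> max (qnorm v K (f i)) (MAX i\<in>I. qnorm v K (f i))"
    using insert.IH by (rule max.mono[OF order_refl])
  finally show ?case
    using insert.hyps by simp
qed simp

lemma qnorm_mult_le:
  assumes "c \<in> K"
  shows "qnorm v K (c * y) \<le> v c * qnorm v K y"
proof (cases "c = 0")
  case False
  then have "0 < v c"
    using v_nonneg[of c] by (simp add: order_less_le)
  have "qnorm v K (c * y) / v c \<le> qnorm v K y"
  proof (rule qnorm_greatest)
    fix a
    assume "a \<in> K"
    then have "qnorm v K (c * y) \<le> v (c * (y - a))"
      using assms by (metis qnorm_le mult_closed right_diff_distrib)
    then show "qnorm v K (c * y) / v c \<le> v (y - a)"
      using \<open>0 < v c\<close> by (simp add: v_mult pos_divide_le_eq mult.commute)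
  qed
  then show ?thesis
    using \<open>0 < v c\<close> by (simp add: pos_divide_le_eq mult.commute)
qed (simp add: qnorm_mem)

lemma qnorm_frobenius_power_le:
  assumes "prime CHAR('a)"
  shows "qnorm v K (z ^ CHAR('a) ^ n) \<le> qnorm v K z ^ CHAR('a) ^ n"
proof -
  let ?q = "CHAR('a) ^ n"
  have "0 < ?q"
    using assms prime_gt_0_nat by simp
  have "root ?q (qnorm v K (z ^ ?q)) \<le> qnorm v K z"
  proof (rule qnorm_greatest)
    fix a
    assume "a \<in> K"
    have "z ^ ?q - a ^ ?q = (z - a) ^ ?q"
      using freshmans_dream'[OF assms refl, of "z - a" a] by (simp add: eq_diff_eq)
    then have "qnorm v K (z ^ ?q) \<le> v (z - a) ^ ?q"
      using qnorm_le[of "a ^ ?q" "z ^ ?q"] \<open>a \<in> K\<close> by (simp add: power_closed v_power)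
    then have "root ?q (qnorm v K (z ^ ?q)) \<le> root ?q (v (z - a) ^ ?q)"
      using \<open>0 < ?q\<close> by (rule real_root_le_mono[rotated])
    also have "\<dots> = v (z - a)"
      using \<open>0 < ?q\<close> by (simp add: real_root_power_cancel)
    finally show "root ?q (qnorm v K (z ^ ?q)) \<le> v (z - a)" .
  qed
  then have "root ?q (qnorm v K (z ^ ?q)) ^ ?q \<le> qnorm v K z ^ ?q"
    by (simp add: power_mono real_root_ge_zero qnorm_nonneg)
  then show ?thesis
    using \<open>0 < ?q\<close> by (simp add: real_root_pow_pos2 qnorm_nonneg)
qed

lemma qnorm_pos:
  assumes "complete_wrt v K" and "z \<notin> K"
  shows "0 < qnorm v K z"
proof (rule ccontr)
  assume "\<not> 0 < qnorm v K z"
  then have "qnorm v K z < inverse (real (Suc n))" for n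
    using qnorm_nonneg[of z] by (simp add: not_less order_le_less_trans)
  then obtain s where s: "\<And>n. s n \<in> K" "\<And>n. v (z - s n) < inverse (real (Suc n))"
    unfolding qnorm_less_iff by metis
  have close: "\<exists>N. \<forall>n\<ge>N. v (z - s n) < e" if "0 < e" for e
  proof -
    obtain N where "\<forall>n\<ge>N. inverse (real (Suc n)) < e"
      using LIMSEQ_inverse_real_of_nat[unfolded lim_sequentially] \<open>0 < e\<close> by auto
    then show ?thesis
      using s(2) by (meson less_trans)
  qed
  have "\<exists>N. \<forall>m\<ge>N. \<forall>n\<ge>N. v (s m - s n) < e" if "0 < e" for e
  proof -
    obtain N where N: "\<forall>n\<ge>N. v (z - s n) < e"
      using close \<open>0 < e\<close> by blast
    have "v (s m - s n) < e" if "N \<le> m" "N \<le> n" for m n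
    proof -
      have "v ((z - s n) - (z - s m)) < e"
        by (rule v_diff_less) (use N that in auto)
      then show ?thesis
        by simp
    qed
    then show ?thesis
      by blast
  qed
  then obtain l where "l \<in> K" and l: "\<forall>e>0. \<exists>N. \<forall>n\<ge>N. v (s n - l) < e"
    using assms(1) s(1) unfolding complete_wrt_def by blast
  have "v (z - l) < e" if "0 < e" for e
  proof -
    obtain N1 N2 where "\<forall>n\<ge>N1. v (z - s n) < e" "\<forall>n\<ge>N2. v (s n - l) < e"
      using close l \<open>0 < e\<close> by blast
    then have "v ((z - s (max N1 N2)) + (s (max N1 N2) - l)) < e"
      by (intro v_add_less) simp_all
    then show ?thesis
      by simp
  qed
  then have "\<not> 0 < v (z - l)"
    by blast
  then have "z = l"
    using v_nonneg[of "z - l"] by simp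
  with \<open>l \<in> K\<close> \<open>z \<notin> K\<close> show False
    by simp
qed

end

locale alg_closed_valued_subfield = valued_subfield v K + alg_closed_subfield K
  for v :: "'a::field \<Rightarrow> real" and K :: "'a set"
begin

lemma qnorm_additive_poly_ge:
  assumes "additive_poly P" and "\<And>i. coeff P i \<in> K"
  shows "v (coeff P i) * qnorm v K z ^ i \<le> qnorm v K (poly P z)"
proof (cases "P = 0")
  case False
  obtain c rs where "set rs \<subseteq> K" and P: "P = smult c (\<Prod>r\<leftarrow>rs. [:- r, 1:])"
    using poly_splits assms(2) by blast
  show ?thesis
  proof (rule qnorm_greatest)
    fix a
    assume "a \<in> K"
    obtain b where "b \<in> K" and "poly P b = a"
      using additive_poly_surj[OF assms(1) False assms(2) \<open>a \<in> K\<close>] by blast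
    then have shift: "poly P (z - b) = poly P z - a"
      using assms(1)[unfolded additive_poly_def, rule_format, of "z - b" b] by simp
    obtain r0 where "r0 \<in> set rs"
      and bound: "v (coeff P i) * v (z - b - r0) ^ i \<le> v (poly P (z - b))"
      using v_additive_poly_ge_nearest_root[OF assms(1) False P] by blast
    have "qnorm v K z \<le> v (z - b - r0)"
      using qnorm_le[of "b + r0" z] \<open>b \<in> K\<close> \<open>r0 \<in> set rs\<close> \<open>set rs \<subseteq> K\<close>
      by (auto simp: add_closed diff_diff_eq)
    then have "v (coeff P i) * qnorm v K z ^ i \<le> v (coeff P i) * v (z - b - r0) ^ i"
      by (intro mult_left_mono power_mono) (simp_all add: qnorm_nonneg)
    with bound shift show "v (coeff P i) * qnorm v K z ^ i \<le> v (poly P z - a)"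
      by simp
  qed
qed (simp add: qnorm_nonneg)

lemma qnorm_mult_frobenius_power:
  assumes "prime CHAR('a)" and "c \<in> K"
  shows "qnorm v K (c * z ^ CHAR('a) ^ n) = v c * qnorm v K z ^ CHAR('a) ^ n"
proof (rule antisym)
  have "qnorm v K (c * z ^ CHAR('a) ^ n) \<le> v c * qnorm v K (z ^ CHAR('a) ^ n)"
    using assms(2) by (rule qnorm_mult_le)
  also have "\<dots> \<le> v c * qnorm v K z ^ CHAR('a) ^ n"
    using assms(1) by (intro mult_left_mono qnorm_frobenius_power_le) simp_all
  finally show "qnorm v K (c * z ^ CHAR('a) ^ n) \<le> v c * qnorm v K z ^ CHAR('a) ^ n" .
  show "v c * qnorm v K z ^ CHAR('a) ^ n \<le> qnorm v K (c * z ^ CHAR('a) ^ n)"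
    using qnorm_additive_poly_ge[OF additive_poly_frobenius_monom[OF assms(1)],
        of c n "CHAR('a) ^ n" z] assms(2)
    by (simp add: poly_monom)
qed

lemma qnorm_frobenius_sum:
  assumes "prime CHAR('a)" and "finite I" and "I \<noteq> {}" and "\<forall>i\<in>I. lam i \<in> K"
  shows "qnorm v K (\<Sum>i\<in>I. lam i * z ^ CHAR('a) ^ i)
    = (MAX i\<in>I. qnorm v K (lam i * z ^ CHAR('a) ^ i))"
proof (rule antisym)
  show "qnorm v K (\<Sum>i\<in>I. lam i * z ^ CHAR('a) ^ i)
      \<le> (MAX i\<in>I. qnorm v K (lam i * z ^ CHAR('a) ^ i))"
    using assms(2,3) by (rule qnorm_sum_le)
  let ?P = "\<Sum>k\<in>I. monom (lam k) (CHAR('a) ^ k)"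
  have additive: "additive_poly ?P"
    using assms(1) by (intro additive_poly_sum additive_poly_frobenius_monom)
  have coeffs: "coeff ?P i \<in> K" for i
    using assms(4) by (auto simp: coeff_sum intro: sum_closed)
  have "coeff ?P (CHAR('a) ^ j) = lam j" if "j \<in> I" for j
    using assms(1,2) that prime_gt_1_nat by (simp add: coeff_sum power_inject_exp)
  then have "v (lam j) * qnorm v K z ^ CHAR('a) ^ j \<le> qnorm v K (poly ?P z)" if "j \<in> I" for j
    using qnorm_additive_poly_ge[OF additive coeffs, of "CHAR('a) ^ j" z] that by simp
  then show "(MAX i\<in>I. qnorm v K (lam i * z ^ CHAR('a) ^ i))
      \<le> qnorm v K (\<Sum>i\<in>I. lam i * z ^ CHAR('a) ^ i)"
    using assms by (simp add: qnorm_mult_frobenius_power poly_sum poly_monom)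
qed

end

theorem mainTheorem3:
  fixes v :: "'a::field \<Rightarrow> real" and K :: "'a set"
  assumes "nonarch_abs v"
    and "subfield K"
    and "complete_wrt v K"
    and "nontrivially_valued v K"
    and "\<not> spherically_complete v K"
    and "spherically_complete v UNIV"
    and "immediate_ext v K"
    and "alg_closed_sub K"
    and "\<exists>p::nat. p > 0 \<and> of_nat p = (0::'a)"
  shows "\<exists>x::nat \<Rightarrow> 'a.
           (\<forall>i. x i \<notin> K) \<and> (\<forall>i j. i \<noteq> j \<longrightarrow> x i - x j \<notin> K) \<and>
           (\<forall>I::nat set. \<forall>lam::nat \<Rightarrow> 'a. finite I \<longrightarrow> I \<noteq> {} \<longrightarrow> (\<forall>i\<in>I. lam i \<in> K) \<longrightarrow>
              qnorm v K (\<Sum>i\<in>I. lam i * x i) = (MAX i\<in>I. qnorm v K (lam i * x i)))"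
proof -
  interpret alg_closed_valued_subfield v K
    using assms(1,2,8) by unfold_locales
  have char: "prime CHAR('a)"
    using assms(9) by (simp add: CHAR_pos_iff prime_CHAR_semidom)
  have "K \<noteq> UNIV"
    using assms(5,6) by auto
  then obtain z where "z \<notin> K"
    by auto
  define x where "x i = z ^ CHAR('a) ^ i" for i
  have orth: "qnorm v K (\<Sum>i\<in>I. lam i * x i) = (MAX i\<in>I. qnorm v K (lam i * x i))"
    if "finite I" "I \<noteq> {}" "\<forall>i\<in>I. lam i \<in> K" for I lam
    unfolding x_def using char that by (rule qnorm_frobenius_sum)
  have pos: "0 < qnorm v K (x i)" for i
    using qnorm_mult_frobenius_power[OF char one_closed, of z i] qnorm_pos[OF assms(3) \<open>z \<notin> K\<close>]
    by (simp add: x_def)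
  have "0 < qnorm v K (x i - x j)" if "i \<noteq> j" for i j
    using orth[of "{i, j}" "\<lambda>k. if k = i then 1 else - 1"] pos[of i] that
    by (simp add: uminus_closed less_max_iff_disj)
  then show ?thesis
    using pos orth by (blast dest: not_mem_if_qnorm_pos)
qed

end
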